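(* Let $n\ge m\ge 1$. Let $L^\sharp_m$ be an $m$-th order Lagrangian (possibly singular and explicitly time dependent). Let $W_{n-1}$ be an arbitrary smooth function of $q^{(0)i},\dots,q^{(n-1)i}$ and $t$. Let $L_n$ be the $n$-th order Lagrangian $$L_n=L^\sharp_m+\frac{d}{dt}W_{n-1}.$$ Then $L_n$ and $L^\sharp_m$ are quantum mechanically equivalent. That is, they lead to the same quantum mechanics, with equivalence understood as the equivalence relation generated by the correspondence of Proposition 1.
   Context: Ostrogradski formalism: for an $N$-th order Lagrangian with $q^{(I)i}=d^Iq^i/dt^I$, the canonical variables are $q^{Ii}=q^{(I)i}$ and $p_{Ii}=\sum_{K=I+1}^{N}(-d/dt)^{K-I-1}\partial L/\partial q^{(K)i}$, for $I=0,\dots,N-1$. Quantization: all constraints are assumed first class. The wave function $\psi(q^{Ii},t)$ obeys the Schrödinger equation $i\hbar\partial_t\psi=\hat H\psi$, with $\hat p_{Ii}=-i\hbar\partial/\partial q^{Ii}$, and satisfies $\hat\gamma\psi=0$ for each constraint. Hamiltonians and constraints are assumed polynomial in the momenta, with a fixed operator ordering. Basic correspondence (Proposition 1): let $L^\sharp$ have order $N-1\ge1$ and $L=L^\sharp+dW/dt$ with $W=W(q^{(0)},\dots,q^{(N-1)},t)$. Treat $L$ by the extended formalism, with Hamiltonian $H^\sharp(\mathbf q_\sharp,\mathbf p_{\sharp}-\partial W/\partial\mathbf q_\sharp,t)-\partial W/\partial t$ and constraints $p_{N-1,i}-\partial W/\partial q^{N-1,i}$ and $\gamma^\sharp_a(\mathbf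 q_\sharp,\mathbf p_\sharp-\partial W/\partial\mathbf q_\sharp,t)$, where $\mathbf q_\sharp=(q^{Ai})_{A\le N-2}$. Then the physical wave functions of $L$ are exactly $\psi^\sharp(\mathbf q_\sharp,t)e^{iW/\hbar}$, with $\psi^\sharp$ ranging over the physical wave functions of $L^\sharp$. Such $L$ and $L^\sharp$ are called quantum mechanically equivalent, and "quantum mechanically equivalent" in general means related by a finite chain of such correspondences (in either direction). *)

theory Defs
  imports "HOL-Analysis.Analysis"
begin

text \<open>Jet coordinates: a point of (infinite) jet space is a sequence
  x :: nat => real^'d, where x I represents the vector (q^{(I)i})_i; the finite
  type 'd indexes the configuration coordinates i. Functions on jet space also
  depend on the time t.\<close>

type_synonym 'd jetfun = "(nat \<Rightarrow> real^'d) \<Rightarrow> real \<Rightarrow> real"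

definition depends_upto :: "nat \<Rightarrow> ('d::finite) jetfun \<Rightarrow> bool" where
  "depends_upto K F \<longleftrightarrow> (\<forall>x y t. (\<forall>I\<le>K. x I = y I) \<longrightarrow> F x t = F y t)"

definition dir_deriv :: "(nat \<Rightarrow> real^'d) \<times> real \<Rightarrow> ('d::finite) jetfun \<Rightarrow> 'd jetfun" where
  "dir_deriv d F = (\<lambda>x t. deriv (\<lambda>s. F (\<lambda>I. x I + s *\<^sub>R fst d I) (t + s * snd d)) 0)"

definition iter_dir_deriv :: "((nat \<Rightarrow> real^'d) \<times> real) list \<Rightarrow> ('d::finite) jetfun \<Rightarrow> 'd jetfun" where
  "iter_dir_deriv ds F = foldr dir_deriv ds F"

text \<open>Smoothness (C^infinity): all iterated directional derivatives exist
  everywhere and are continuous (product topology on jet space; for functions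
  depending on finitely many jet coordinates this is ordinary C^infinity).\<close>
definition smooth_jet :: "('d::finite) jetfun \<Rightarrow> bool" where
  "smooth_jet F \<longleftrightarrow>
     (\<forall>ds x t. continuous (at (x, t)) (\<lambda>p. iter_dir_deriv ds F (fst p) (snd p)) \<and>
        (\<forall>d. (\<lambda>s. iter_dir_deriv ds F (\<lambda>I. x I + s *\<^sub>R fst d I) (t + s * snd d))
               differentiable (at 0)))"

definition partial_q :: "nat \<Rightarrow> 'd \<Rightarrow> ('d::finite) jetfun \<Rightarrow> 'd jetfun" where
  "partial_q I i F = (\<lambda>x t. deriv (\<lambda>s. F (x(I := x I + s *\<^sub>R axis i 1)) t) 0)"

definition partial_t :: "('d::finite) jetfun \<Rightarrow> 'd jetfun" where
  "partial_t F = (\<lambda>x t. deriv (\<lambda>s. F x s) t)"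

definition total_deriv :: "nat \<Rightarrow> ('d::finite) jetfun \<Rightarrow> 'd jetfun" where
  "total_deriv K W = (\<lambda>x t. partial_t W x t +
      (\<Sum>I\<le>K. \<Sum>i\<in>UNIV. partial_q I i W x t * (x (Suc I) $ i)))"

definition lagrangian :: "nat \<Rightarrow> ('d::finite) jetfun \<Rightarrow> bool" where
  "lagrangian N L \<longleftrightarrow> depends_upto N L \<and> smooth_jet L"

text \<open>Lagrangians are tagged with the order N used in the Ostrogradski
  (extended) formalism.\<close>
definition basic_corresp :: "nat \<times> ('d::finite) jetfun \<Rightarrow> nat \<times> 'd jetfun \<Rightarrow> bool" where
  "basic_corresp A B \<longleftrightarrow>
     (case A of (N, L) \<Rightarrow> case B of (N', Ls) \<Rightarrow>
        N' + 1 = N \<and> N' \<ge> 1 \<and> depends_upto N' Ls \<and>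
        (\<exists>W. depends_upto N' W \<and> smooth_jet W \<and>
             (\<forall>x t. L x t = Ls x t + total_deriv N' W x t)))"

definition qm_equiv :: "nat \<times> ('d::finite) jetfun \<Rightarrow> nat \<times> 'd jetfun \<Rightarrow> bool" where
  "qm_equiv = equivclp basic_corresp"

end

theory Submission
  imports Defs
begin

text \<open>Adding the total derivative of \<open>W = 0\<close> turns a Lagrangian of order \<open>N \<ge> 1\<close> into
  one of order \<open>N + 1\<close>, so \<open>L\<^sup>\<sharp>\<^sub>m\<close>, read at order \<open>n\<close>, descends to order \<open>m\<close> by a chain
  of basic correspondences. Proposition 1 cannot relate \<open>L\<^sub>n\<close> and \<open>L\<^sup>\<sharp>\<^sub>m\<close> directly when
  \<open>m = n\<close>, since \<open>L\<^sup>\<sharp>\<close> must have order \<open>n - 1\<close>. At order \<open>n + 1\<close>, however, \<open>L\<^sub>n\<close>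
  corresponds both to itself at order \<open>n\<close> (with \<open>W = 0\<close>) and to \<open>L\<^sup>\<sharp>\<^sub>m\<close> at order \<open>n\<close>
  (with the given \<open>W\<close>, whose total derivative does not change when taken at order \<open>n\<close>).\<close>

lemma depends_upto_mono: "depends_upto K F \<Longrightarrow> K \<le> K' \<Longrightarrow> depends_upto K' F"
  unfolding depends_upto_def by auto

lemma depends_upto_add:
  "depends_upto K F \<Longrightarrow> depends_upto K G \<Longrightarrow> depends_upto K (\<lambda>x t. F x t + G x t)"
  unfolding depends_upto_def by metis

lemma depends_upto_zero: "depends_upto K (\<lambda>x t. 0)"
  unfolding depends_upto_def by simp

lemma iter_dir_deriv_zero: "iter_dir_deriv ds (\<lambda>x t. 0) = (\<lambda>x t. 0 :: real)"
  unfolding iter_dir_deriv_def by (induction ds) (simp_all add: dir_deriv_def)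

lemma smooth_jet_zero: "smooth_jet (\<lambda>x t. 0)"
  unfolding smooth_jet_def iter_dir_deriv_zero by simp

lemma total_deriv_zero: "total_deriv K (\<lambda>x t. 0) = (\<lambda>x t. 0)"
  unfolding total_deriv_def partial_t_def partial_q_def by simp

lemma partial_q_eq_0_above:
  assumes "depends_upto K W" and "K < I"
  shows "partial_q I i W x t = 0"
proof -
  have "(\<lambda>s. W (x(I := x I + s *\<^sub>R axis i 1)) t) = (\<lambda>s. W x t)"
    using assms unfolding depends_upto_def by auto
  then show ?thesis unfolding partial_q_def by simp
qed

lemma total_deriv_eq_above:
  assumes "depends_upto K W" and "K \<le> N"
  shows "total_deriv N W = total_deriv K W"
  using assms(2)
proof (induction N rule: dec_induct)
  case (step N)
  have "{..Suc N} = insert (Suc N) {..N}" by auto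
  with step partial_q_eq_0_above[OF assms(1)] show ?case
    unfolding total_deriv_def by simp
qed simp

lemma depends_upto_total_deriv:
  assumes "depends_upto K W"
  shows "depends_upto (Suc K) (total_deriv K W)"
  unfolding depends_upto_def
proof (intro allI impI)
  fix x y :: "nat \<Rightarrow> real^'a" and t
  assume xy: "\<forall>I\<le>Suc K. x I = y I"
  then have xy_K: "\<forall>I\<le>K. x I = y I" by simp
  have "W x = W y"
    using assms xy_K unfolding depends_upto_def by blast
  then have "partial_t W x t = partial_t W y t"
    unfolding partial_t_def by simp
  moreover have "partial_q I i W x t = partial_q I i W y t" if "I \<le> K" for I i
  proof -
    have "W (x(I := v)) s = W (y(I := v)) s" for v s
      using assms xy_K unfolding depends_upto_def by simp
    then show ?thesis
      using xy_K that unfolding partial_q_def by simp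
  qed
  ultimately show "total_deriv K W x t = total_deriv K W y t"
    using xy unfolding total_deriv_def by (auto intro!: sum.cong)
qed

lemma basic_corresp_add_total_deriv:
  assumes "1 \<le> N" and "depends_upto N Ls"
    and "depends_upto K W" and "K \<le> N" and "smooth_jet W"
  shows "basic_corresp (Suc N, \<lambda>x t. Ls x t + total_deriv K W x t) (N, Ls)"
  unfolding basic_corresp_def
  using assms depends_upto_mono[OF assms(3,4)] total_deriv_eq_above[OF assms(3,4)]
  by auto

lemma basic_corresp_raise_order:
  assumes "1 \<le> N" and "depends_upto N L"
  shows "basic_corresp (Suc N, L) (N, L)"
  using basic_corresp_add_total_deriv[OF assms depends_upto_zero order_refl smooth_jet_zero]
  by (simp add: total_deriv_zero)

lemma qm_equiv_raise_order:
  assumes "1 \<le> m" and "depends_upto m L" and "m \<le> N"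
  shows "qm_equiv (N, L) (m, L)"
  using assms(3)
proof (induction N rule: dec_induct)
  case base
  show ?case unfolding qm_equiv_def by simp
next
  case (step k)
  have "basic_corresp (Suc k, L) (k, L)"
    using assms(1) step.hyps(1) depends_upto_mono[OF assms(2) step.hyps(1)]
    by (intro basic_corresp_raise_order) simp_all
  with step.IH show ?case
    unfolding qm_equiv_def by (meson equivclp_trans r_into_equivclp)
qed

theorem theorem1:
  fixes n m :: nat
    and Ls :: "('d::finite) jetfun"
    and W :: "'d jetfun"
  assumes "1 \<le> m" and "m \<le> n"
    and "lagrangian m Ls"
    and "depends_upto (n - 1) W" and "smooth_jet W"
  shows "qm_equiv (n, \<lambda>x t. Ls x t + total_deriv (n - 1) W x t) (m, Ls)"
proof -
  define L where "L = (\<lambda>x t. Ls x t + total_deriv (n - 1) W x t)"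
  have n_pos: "1 \<le> n" using assms(1,2) by simp
  have Ls_n: "depends_upto n Ls"
    using assms(2,3) depends_upto_mono unfolding lagrangian_def by blast
  have "depends_upto n (total_deriv (n - 1) W)"
    using depends_upto_total_deriv[OF assms(4)] n_pos by simp
  then have L_n: "depends_upto n L"
    unfolding L_def using Ls_n by (rule depends_upto_add[rotated])
  have "basic_corresp (Suc n, L) (n, Ls)"
    unfolding L_def using n_pos Ls_n assms(4,5) by (intro basic_corresp_add_total_deriv) simp_all
  moreover have "basic_corresp (Suc n, L) (n, L)"
    using basic_corresp_raise_order[OF n_pos L_n] .
  moreover have "qm_equiv (n, Ls) (m, Ls)"
    using qm_equiv_raise_order assms(1,2,3) unfolding lagrangian_def by blast
  ultimately show ?thesis
    unfolding L_def[symmetric] qm_equiv_def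
    by (meson equivclp_sym equivclp_trans r_into_equivclp)
qed

end
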